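(* Let $M$ be an $\widehat{\mathrm{FI}}$-module such that $\Sigma^NM$ has generation degree $\le d$. Then $M$ has generation degree $\le d+N$.
   Context: $\widehat{\mathrm S}_n=\{(\sigma,d)\in\mathrm S_n\times\mathbb Z: d\text{ odd}\iff\operatorname{sgn}\sigma=-1\}$ ($n\ge2$; trivial for $n=0,1$). $\widehat{\mathrm{FI}}$: objects $n\in\mathbb N$, $\widehat{\mathrm{FI}}(n,m)=\widehat{\mathrm S}_m/i_2(\widehat{\mathrm S}_{m-n})$ ($i_1,i_2$ inclusions on first/last letters), composition $([s],[t])\mapsto[t\,i_1(s)]$, with monoidal structure $n\oplus m=n+m$ defined on morphisms via $i_1,i_2$ and a braiding from $\mathrm{Br}_n\to\widehat{\mathrm S}_n$, $\sigma_{i,i+1}\mapsto((i\ i{+}1),1)$. $\Sigma M$ is the restriction of $M$ along $-\oplus 1$, $(\Sigma M)_n=M_{n+1}$. Generation degree $\le d$: $M$ is a quotient of $\mathbf I(W)$, $\mathbf I(W)_m=\bigoplus_{n\le m}\mathbb Z[\widehat{\mathrm{FI}}(n,m)]\otimes_{\mathbb Z\widehat{\mathrm S}_n}W_n$, with $W_n=0$ for $n>d$. *)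

theory Defs
  imports "HOL-Combinatorics.Permutations"
begin

text \<open>Elements of the groups hat S_n are pairs (sigma, d) with sigma a permutation
of the letters 0..n-1 (identity on all other naturals) and d an integer.\<close>

type_synonym hsel = "(nat \<Rightarrow> nat) \<times> int"

definition hS :: "nat \<Rightarrow> hsel set" where
  "hS n = {(\<sigma>, d). \<sigma> permutes {..<n} \<and>
            (if 2 \<le> n then (odd d \<longleftrightarrow> (sign \<sigma> :: int) = -1) else d = 0)}"

definition hmult :: "hsel \<Rightarrow> hsel \<Rightarrow> hsel" where
  "hmult s t = (fst s \<circ> fst t, snd s + snd t)"

text \<open>i_1 is the identity on representatives; i_2 n shifts a permutation of the
first k letters to the letters n..n+k-1.\<close>

definition hi2 :: "nat \<Rightarrow> hsel \<Rightarrow> hsel" where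
  "hi2 n t = ((\<lambda>x. if x < n then x else fst t (x - n) + n), snd t)"

text \<open>The morphism of hat FI(n,m) represented by s in hat S_m: the left coset
s * i_2(hat S_(m-n)).\<close>

definition hcoset :: "nat \<Rightarrow> nat \<Rightarrow> hsel \<Rightarrow> hsel set" where
  "hcoset n m s = (\<lambda>h. hmult s (hi2 n h)) ` hS (m - n)"

definition hFI :: "nat \<Rightarrow> nat \<Rightarrow> hsel set set" where
  "hFI n m = (if n \<le> m then hcoset n m ` hS m else {})"

definition hid :: "nat \<Rightarrow> hsel set" where
  "hid n = hcoset n n (id, 0)"

text \<open>Composition ([s],[t]) |-> [t i_1(s)] of [s] : n -> m and [t] : m -> k.\<close>

definition hcomp :: "nat \<Rightarrow> nat \<Rightarrow> hsel set \<Rightarrow> hsel set \<Rightarrow> hsel set" where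
  "hcomp n k g f = hcoset n k (hmult (SOME t. t \<in> g) (SOME s. s \<in> f))"

text \<open>An hat FI-module: abelian groups M_n (subgroups of an ambient abelian group)
with a functorial additive action.\<close>

definition is_hFI_module :: "(nat \<Rightarrow> 'a::ab_group_add set) \<Rightarrow>
    (nat \<Rightarrow> nat \<Rightarrow> hsel set \<Rightarrow> 'a \<Rightarrow> 'a) \<Rightarrow> bool" where
  "is_hFI_module M act \<longleftrightarrow>
     (\<forall>n. 0 \<in> M n \<and> (\<forall>x\<in>M n. \<forall>y\<in>M n. x + y \<in> M n) \<and> (\<forall>x\<in>M n. - x \<in> M n)) \<and>
     (\<forall>n m f. f \<in> hFI n m \<longrightarrow>
        (\<forall>x\<in>M n. act n m f x \<in> M m) \<and>
        (\<forall>x\<in>M n. \<forall>y\<in>M n. act n m f (x + y) = act n m f x + act n m f y)) \<and>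
     (\<forall>n. \<forall>x\<in>M n. act n n (hid n) x = x) \<and>
     (\<forall>n m k f g. f \<in> hFI n m \<longrightarrow> g \<in> hFI m k \<longrightarrow>
        (\<forall>x\<in>M n. act n k (hcomp n k g f) x = act m k g (act n m f x)))"

text \<open>f (+) id_1 for f : n -> m: the injection sending n to m, using the lift of
the cycle given by the (positive) braiding, i.e. with integer part m - n.\<close>

definition hcyc :: "nat \<Rightarrow> nat \<Rightarrow> hsel" where
  "hcyc n m = ((\<lambda>x. if x = n then m else if n < x \<and> x \<le> m then x - 1 else x), int (m - n))"

definition hplus1 :: "nat \<Rightarrow> nat \<Rightarrow> hsel set \<Rightarrow> hsel set" where
  "hplus1 n m f = hcoset (Suc n) (Suc m) (hmult (SOME s. s \<in> f) (hcyc n m))"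

definition hSigma :: "(nat \<Rightarrow> 'a set) \<times> (nat \<Rightarrow> nat \<Rightarrow> hsel set \<Rightarrow> 'a \<Rightarrow> 'a) \<Rightarrow>
    (nat \<Rightarrow> 'a set) \<times> (nat \<Rightarrow> nat \<Rightarrow> hsel set \<Rightarrow> 'a \<Rightarrow> 'a)" where
  "hSigma Ma = (\<lambda>n. fst Ma (Suc n), \<lambda>n m f. snd Ma (Suc n) (Suc m) (hplus1 n m f))"

inductive_set agen :: "'a::ab_group_add set \<Rightarrow> 'a set" for S where
  agen_zero: "0 \<in> agen S"
| agen_base: "x \<in> S \<Longrightarrow> x \<in> agen S"
| agen_add: "x \<in> agen S \<Longrightarrow> y \<in> agen S \<Longrightarrow> x + y \<in> agen S"
| agen_neg: "x \<in> agen S \<Longrightarrow> - x \<in> agen S"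

text \<open>Generation degree \<le> d: every M_m is generated by images of elements of
degrees \<le> d (equivalently, M is a quotient of some I(W) with W_n = 0 for n > d).\<close>

definition gen_deg_le :: "(nat \<Rightarrow> 'a::ab_group_add set) \<Rightarrow>
    (nat \<Rightarrow> nat \<Rightarrow> hsel set \<Rightarrow> 'a \<Rightarrow> 'a) \<Rightarrow> nat \<Rightarrow> bool" where
  "gen_deg_le M act d \<longleftrightarrow>
     (\<forall>m. M m \<subseteq> agen {act n m f x | n f x. n \<le> d \<and> f \<in> hFI n m \<and> x \<in> M n})"

end

(* Iterating the shift gives (\<Sigma>^N M)_k = M_(k+N), and a morphism f : n -> k acts on \<Sigma>^N M
   as the morphism f (+) id_N : n+N -> k+N acts on M.  The only thing to check is that f (+) 1
   is again a morphism, i.e. that its representative satisfies the parity condition defining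
   hat S_(k+1); for the shifted permutations i_2 and for the cycle realising the braiding this is a
   sign computation.  Hence generators of \<Sigma>^N M of degree \<le> d are images of elements of M of
   degree \<le> d + N, which generate M_m for m > d + N; for m \<le> d + N, M_m generates itself via the
   identity morphism. *)

theory Submission
  imports Defs
begin

lemma hS_iff:
  "(\<sigma>, d) \<in> hS n \<longleftrightarrow>
     \<sigma> permutes {..<n} \<and> (if 2 \<le> n then even d = evenperm \<sigma> else d = 0)"
  by (auto simp: hS_def sign_def)

lemma permutes_lessThan_less_2: "\<sigma> permutes {..<n} \<Longrightarrow> n < (2::nat) \<Longrightarrow> \<sigma> = id"
  by (cases n) (auto simp: lessThan_Suc)

lemma hS_less_2: "n < 2 \<Longrightarrow> hS n = {(id, 0)}"
  by (auto simp: hS_iff permutes_lessThan_less_2 permutes_id)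

lemma hS_ge_2: "2 \<le> n \<Longrightarrow> (\<sigma>, d) \<in> hS n \<longleftrightarrow> \<sigma> permutes {..<n} \<and> even d = evenperm \<sigma>"
  by (simp add: hS_iff)

lemma id_in_hS: "(id, 0) \<in> hS n"
  by (simp add: hS_iff permutes_id)

lemma permutes_lessThan_Suc: "\<sigma> permutes {..<n} \<Longrightarrow> \<sigma> permutes {..<Suc n}"
  by (rule permutes_subset) auto

lemma hS_subset_hS_Suc: "hS n \<subseteq> hS (Suc n)"
proof (cases "2 \<le> n")
  case True
  then show ?thesis
    by (auto simp: hS_ge_2 permutes_lessThan_Suc)
next
  case False
  then show ?thesis
    by (simp add: hS_less_2 id_in_hS)
qed

lemma hmult_in_hS:
  assumes "s \<in> hS n" "t \<in> hS n"
  shows "hmult s t \<in> hS n"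
proof (cases "2 \<le> n")
  case True
  obtain \<sigma> b \<tau> c where st: "s = (\<sigma>, b)" "t = (\<tau>, c)"
    by fastforce
  with assms True have "\<sigma> permutes {..<n}" "\<tau> permutes {..<n}"
    "even b = evenperm \<sigma>" "even c = evenperm \<tau>"
    by (auto simp: hS_ge_2)
  moreover from this have "evenperm (\<sigma> \<circ> \<tau>) = (evenperm \<sigma> = evenperm \<tau>)"
    by (meson evenperm_comp finite_lessThan permutes_imp_permutation)
  ultimately show ?thesis
    using True by (auto simp: st hmult_def hS_ge_2 permutes_compose)
next
  case False
  with assms show ?thesis
    by (simp add: hS_less_2 hmult_def)
qed

lemma hi2_id: "hi2 n (id, e) = (id, e)"
  by (auto simp: hi2_def)

lemma fst_hi2_eq_map_permutation:
  assumes "\<sigma> permutes {..<k}"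
  shows "fst (hi2 n (\<sigma>, e)) = map_permutation {..<k} (\<lambda>x. x + n) \<sigma>"
proof
  fix x
  show "fst (hi2 n (\<sigma>, e)) x = map_permutation {..<k} (\<lambda>x. x + n) \<sigma> x"
  proof (cases "n \<le> x \<and> x < n + k")
    case True
    define y where "y = x - n"
    with True have "y < k" "x = y + n"
      by auto
    then show ?thesis
      using map_permutation_apply[of "\<lambda>x. x + n" "{..<k}" y \<sigma>] by (simp add: hi2_def)
  next
    case False
    then show ?thesis
      using permutes_not_in[OF assms, of "x - n"]
      by (auto simp: hi2_def map_permutation_def restrict_id_def)
  qed
qed

lemma fst_hi2_permutes_evenperm:
  assumes "\<sigma> permutes {..<k}"
  shows "fst (hi2 n (\<sigma>, e)) permutes {..<n + k} \<and> evenperm (fst (hi2 n (\<sigma>, e))) = evenperm \<sigma>"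
proof -
  have "bij_betw (\<lambda>x. x + n) {..<k} {n..<n + k}"
    by (rule bij_betwI[where g = "\<lambda>x. x - n"]) auto
  then have "map_permutation {..<k} (\<lambda>x. x + n) \<sigma> permutes {n..<n + k}"
    using assms by (rule map_permutation_permutes)
  then have "map_permutation {..<k} (\<lambda>x. x + n) \<sigma> permutes {..<n + k}"
    by (rule permutes_subset) auto
  moreover have "evenperm (map_permutation {..<k} (\<lambda>x. x + n) \<sigma>) = evenperm \<sigma>"
    using assms by (intro evenperm_map_permutation) auto
  ultimately show ?thesis
    using assms by (simp add: fst_hi2_eq_map_permutation)
qed

lemma hi2_in_hS:
  assumes "n \<le> m" "t \<in> hS (m - n)"
  shows "hi2 n t \<in> hS m"
proof (cases "2 \<le> m - n")
  case True
  obtain \<sigma> e where t: "t = (\<sigma>, e)"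
    by fastforce
  with assms True have "\<sigma> permutes {..<m - n}" "even e = evenperm \<sigma>"
    by (auto simp: hS_ge_2)
  with fst_hi2_permutes_evenperm[of \<sigma> "m - n" n e] assms(1) True show ?thesis
    by (auto simp: t hS_ge_2 hi2_def)
next
  case False
  with assms show ?thesis
    by (simp add: hS_less_2 hi2_id id_in_hS)
qed

lemma hcyc_self: "hcyc n n = (id, 0)"
  by (auto simp: hcyc_def)

lemma fst_hcyc_Suc:
  "n \<le> m \<Longrightarrow> fst (hcyc n (Suc m)) = transpose m (Suc m) \<circ> fst (hcyc n m)"
  by (auto simp: hcyc_def transpose_def fun_eq_iff)

lemma fst_hcyc_permutes_evenperm:
  assumes "n \<le> m"
  shows "fst (hcyc n m) permutes {..<Suc m} \<and> evenperm (fst (hcyc n m)) = even (m - n)"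
  using assms
proof (induction m rule: dec_induct)
  case base
  \<comment> \<open>stated explicitly: the induction's ?case is eta-expanded, which hides id from simp\<close>
  show "fst (hcyc n n) permutes {..<Suc n} \<and> evenperm (fst (hcyc n n)) = even (n - n)"
    by (simp add: hcyc_self)
next
  case (step k)
  have "fst (hcyc n k) permutes {..<Suc (Suc k)}"
    using step.IH by (simp add: permutes_lessThan_Suc)
  moreover have "transpose k (Suc k) permutes {..<Suc (Suc k)}"
    by (auto intro: permutes_swap_id)
  moreover have "permutation (fst (hcyc n k))"
    using step.IH by (meson finite_lessThan permutes_imp_permutation)
  ultimately show "fst (hcyc n (Suc k)) permutes {..<Suc (Suc k)} \<and>
      evenperm (fst (hcyc n (Suc k))) = even (Suc k - n)"
    using step by (simp add: fst_hcyc_Suc permutes_compose evenperm_comp permutation_swap_id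
        evenperm_swap Suc_diff_le)
qed

lemma hcyc_in_hS:
  assumes "n \<le> m"
  shows "hcyc n m \<in> hS (Suc m)"
proof (cases "m = 0")
  case True
  with assms show ?thesis
    by (simp add: hcyc_self id_in_hS)
next
  case False
  then show ?thesis
    using fst_hcyc_permutes_evenperm[OF assms]
    by (cases "hcyc n m") (simp add: hS_ge_2 hcyc_def)
qed

lemma hcoset_subset_hS:
  assumes "n \<le> m" "s \<in> hS m"
  shows "hcoset n m s \<subseteq> hS m"
  unfolding hcoset_def using assms by (blast intro: hmult_in_hS hi2_in_hS)

lemma some_in_hFI_in_hS:
  assumes "f \<in> hFI n m"
  shows "(SOME s. s \<in> f) \<in> hS m"
proof -
  from assms obtain s where nm: "n \<le> m" and s: "s \<in> hS m" and f: "f = hcoset n m s"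
    by (auto simp: hFI_def split: if_splits)
  have "hmult s (hi2 n (id, 0)) \<in> f"
    unfolding f hcoset_def using id_in_hS by blast
  then have "(SOME s. s \<in> f) \<in> f"
    by (rule someI)
  with hcoset_subset_hS[OF nm s] show ?thesis
    unfolding f by blast
qed

lemma hplus1_in_hFI:
  assumes "f \<in> hFI n m"
  shows "hplus1 n m f \<in> hFI (Suc n) (Suc m)"
proof -
  have nm: "n \<le> m"
    using assms by (simp add: hFI_def split: if_splits)
  have "hmult (SOME s. s \<in> f) (hcyc n m) \<in> hS (Suc m)"
    using some_in_hFI_in_hS[OF assms] hS_subset_hS_Suc hcyc_in_hS[OF nm]
    by (blast intro: hmult_in_hS)
  with nm show ?thesis
    by (simp add: hplus1_def hFI_def)
qed

lemma fst_hSigma_iter: "fst ((hSigma ^^ N) (M, act)) = (\<lambda>n. M (n + N))"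
  by (induction N) (simp_all add: hSigma_def)

lemma snd_hSigma_iter:
  assumes "f \<in> hFI n m"
  shows "\<exists>g \<in> hFI (n + N) (m + N). snd ((hSigma ^^ N) (M, act)) n m f = act (n + N) (m + N) g"
  using assms
proof (induction N arbitrary: n m f)
  case 0
  then show ?case
    by auto
next
  case (Suc N)
  from Suc.IH[OF hplus1_in_hFI[OF Suc.prems]] show ?case
    by (simp add: hSigma_def)
qed

definition degree_le_images ::
    "(nat \<Rightarrow> 'a set) \<Rightarrow> (nat \<Rightarrow> nat \<Rightarrow> hsel set \<Rightarrow> 'a \<Rightarrow> 'a) \<Rightarrow> nat \<Rightarrow> nat \<Rightarrow> 'a set" where
  "degree_le_images M act d m = {act n m f x | n f x. n \<le> d \<and> f \<in> hFI n m \<and> x \<in> M n}"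

lemma gen_deg_le_iff: "gen_deg_le M act d \<longleftrightarrow> (\<forall>m. M m \<subseteq> agen (degree_le_images M act d m))"
  by (simp add: gen_deg_le_def degree_le_images_def)

lemma agen_mono:
  assumes "S \<subseteq> T"
  shows "agen S \<subseteq> agen T"
proof
  fix x
  assume "x \<in> agen S"
  then show "x \<in> agen T"
    by induction (use assms in \<open>auto intro: agen.intros\<close>)
qed

lemma hid_in_hFI: "hid n \<in> hFI n n"
  by (simp add: hFI_def hid_def id_in_hS)

lemma subset_agen_degree_le_images:
  assumes "is_hFI_module M act" "m \<le> d"
  shows "M m \<subseteq> agen (degree_le_images M act d m)"
proof
  fix x
  assume x: "x \<in> M m"
  with assms(1) have "x = act m m (hid m) x"
    by (simp add: is_hFI_module_def)
  also have "\<dots> \<in> degree_le_images M act d m"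
    unfolding degree_le_images_def using assms(2) x hid_in_hFI by blast
  finally show "x \<in> agen (degree_le_images M act d m)"
    by (rule agen_base)
qed

lemma degree_le_images_hSigma_iter:
  "degree_le_images (fst ((hSigma ^^ N) (M, act))) (snd ((hSigma ^^ N) (M, act))) d m
     \<subseteq> degree_le_images M act (d + N) (m + N)"
proof
  fix y
  assume "y \<in> degree_le_images (fst ((hSigma ^^ N) (M, act))) (snd ((hSigma ^^ N) (M, act))) d m"
  then obtain n f x where y: "y = snd ((hSigma ^^ N) (M, act)) n m f x"
    and n: "n \<le> d" and f: "f \<in> hFI n m" and x: "x \<in> M (n + N)"
    by (auto simp: degree_le_images_def fst_hSigma_iter)
  obtain g where "g \<in> hFI (n + N) (m + N)" "y = act (n + N) (m + N) g x"
    using snd_hSigma_iter[OF f, of N M act] y by auto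
  with n x show "y \<in> degree_le_images M act (d + N) (m + N)"
    unfolding degree_le_images_def by fastforce
qed

theorem mainTheorem13:
  fixes M :: "nat \<Rightarrow> 'a::ab_group_add set"
    and act :: "nat \<Rightarrow> nat \<Rightarrow> hsel set \<Rightarrow> 'a \<Rightarrow> 'a"
    and N d :: nat
  assumes "is_hFI_module M act"
    and "gen_deg_le (fst ((hSigma ^^ N) (M, act))) (snd ((hSigma ^^ N) (M, act))) d"
  shows "gen_deg_le M act (d + N)"
  unfolding gen_deg_le_iff
proof
  fix m
  show "M m \<subseteq> agen (degree_le_images M act (d + N) m)"
  proof (cases "m \<le> d + N")
    case True
    with assms(1) show ?thesis
      by (rule subset_agen_degree_le_images)
  next
    case False
    define k where "k = m - N"
    with False have m: "m = k + N"
      by simp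
    let ?X = "(hSigma ^^ N) (M, act)"
    have "M m = fst ?X k"
      by (simp add: fst_hSigma_iter m)
    also have "\<dots> \<subseteq> agen (degree_le_images (fst ?X) (snd ?X) d k)"
      using assms(2) by (simp add: gen_deg_le_iff)
    also have "\<dots> \<subseteq> agen (degree_le_images M act (d + N) m)"
      unfolding m by (rule agen_mono[OF degree_le_images_hSigma_iter])
    finally show ?thesis .
  qed
qed

end
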